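(* Let $F$ be a clause-set and $v$ a singular variable for $F$, with singular literal $x$, main clause $C$ and side clauses $D_1,\dots,D_m$. Let $C' := C\setminus\{x\}$ and $D_i' := D_i\setminus\{\overline{x}\}$. Then the following are equivalent: 1. $F$ is saturated minimally unsatisfiable. 2. All of the following hold: (a) $\mathrm{DP}_v(F)$ is saturated minimally unsatisfiable; (b) $C' = \bigcap_{i=1}^m D_i'$; (c) for every $E\in F$ with $v\notin\mathrm{var}(E)$ we have $C'\not\subseteq E$.
   Context: Literals are variables $v$ and complements $\overline{v}$; a clause is a finite set of literals with no complementary pair; a clause-set is a finite set of clauses; $\mathrm{var}(F)$ is the set of variables of $F$; $\mathrm{ldeg}_F(x)$ is the number of clauses of $F$ containing literal $x$. $\mathrm{DP}_v(F) := \{C \in F : v \notin \mathrm{var}(C)\} \cup \{(C \cup D)\setminus\{v,\overline{v}\} : C, D \in F,\ C \cap \overline{D} = \{v\}\}$. A clause-set is minimally unsatisfiable if it is unsatisfiable and each proper subset is satisfiable; a minimally unsatisfiable $F$ is saturated if for every $C \in F$ and every literal $y$ with $\mathrm{var}(y) \in \mathrm{var}(F)\setminus \mathrm{var}(C)$, the clause-set $(F\setminus\{C\})\cup\{C\cup\{y\}\}$ is satisfiable. A variable $v$ is singular for $F$ if $\min(\mathrm{ldeg}_F(v),\mathrm{ldeg}_F(\overline{v}))=1$; a singular literal for $v$ is a literal $x$ with $\mathrm{var}(x)=v$ and $\mathrm{ldeg}_F(x)=1$ (one chosen if both polarities qualify); the main clause is the clause containing $x$, the side clauses are the clauses containing $\overline{x}$.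 *)

theory Defs
  imports Main
begin

datatype 'v lit = Pos 'v | Neg 'v

fun var_lit :: "'v lit \<Rightarrow> 'v" where
  "var_lit (Pos v) = v" | "var_lit (Neg v) = v"

fun comp :: "'v lit \<Rightarrow> 'v lit" where
  "comp (Pos v) = Neg v" | "comp (Neg v) = Pos v"

type_synonym 'v clause = "'v lit set"
type_synonym 'v cls = "'v clause set"

definition comp_clause :: "'v clause \<Rightarrow> 'v clause" where
  "comp_clause C = comp ` C"

definition is_clause :: "'v clause \<Rightarrow> bool" where
  "is_clause C \<longleftrightarrow> finite C \<and> (\<forall>l\<in>C. comp l \<notin> C)"

definition is_clause_set :: "'v cls \<Rightarrow> bool" where
  "is_clause_set F \<longleftrightarrow> finite F \<and> (\<forall>C\<in>F. is_clause C)"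

definition var_clause :: "'v clause \<Rightarrow> 'v set" where
  "var_clause C = var_lit ` C"

definition var_cls :: "'v cls \<Rightarrow> 'v set" where
  "var_cls F = (\<Union>C\<in>F. var_clause C)"

definition ldeg :: "'v cls \<Rightarrow> 'v lit \<Rightarrow> nat" where
  "ldeg F x = card {C \<in> F. x \<in> C}"

definition DP :: "'v \<Rightarrow> 'v cls \<Rightarrow> 'v cls" where
  "DP v F = {C \<in> F. v \<notin> var_clause C}
     \<union> {(C \<union> D) - {Pos v, Neg v} | C D. C \<in> F \<and> D \<in> F \<and> C \<inter> comp_clause D = {Pos v}}"

fun lit_true :: "('v \<Rightarrow> bool) \<Rightarrow> 'v lit \<Rightarrow> bool" where
  "lit_true \<phi> (Pos v) = \<phi> v" | "lit_true \<phi> (Neg v) = (\<not> \<phi> v)"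

definition satisfiable :: "'v cls \<Rightarrow> bool" where
  "satisfiable F \<longleftrightarrow> (\<exists>\<phi>. \<forall>C\<in>F. \<exists>l\<in>C. lit_true \<phi> l)"

definition min_unsat :: "'v cls \<Rightarrow> bool" where
  "min_unsat F \<longleftrightarrow> \<not> satisfiable F \<and> (\<forall>G. G \<subset> F \<longrightarrow> satisfiable G)"

definition saturated_min_unsat :: "'v cls \<Rightarrow> bool" where
  "saturated_min_unsat F \<longleftrightarrow> min_unsat F \<and>
     (\<forall>C\<in>F. \<forall>y. var_lit y \<in> var_cls F - var_clause C \<longrightarrow>
        satisfiable ((F - {C}) \<union> {C \<union> {y}}))"

definition singular :: "'v cls \<Rightarrow> 'v \<Rightarrow> bool" where
  "singular F v \<longleftrightarrow> min (ldeg F (Pos v)) (ldeg F (Neg v)) = 1"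

end

theory Submission
  imports Defs
begin

text \<open>Minimal unsatisfiability and saturation are both certified by witnesses: for a clause E
  (and a literal y outside E) an assignment falsifying exactly E (and making y true). Since x
  occurs only in C, the resolvents on v are the clauses C' \<union> D_i', and once C' \<subseteq> D_i' they
  are just the D_i'; so DP_v(F) consists of the v-free clauses and the D_i', and witnesses move
  between F and DP_v(F) by flipping v. Conditions (b) and (c) are exactly what saturation of F
  forces: a side clause missing a literal of C' would give a model of F with x false, a literal in
  every D_i' but outside C' one with x true, and a v-free clause containing C' would be
  falsified together with C.\<close>

definition sat_clause :: "('v \<Rightarrow> bool) \<Rightarrow> 'v clause \<Rightarrow> bool" where
  "sat_clause \<phi> E \<longleftrightarrow> (\<exists>l\<in>E. lit_true \<phi> l)"

definition witness :: "'v cls \<Rightarrow> 'v clause \<Rightarrow> ('v \<Rightarrow> bool) \<Rightarrow> bool" where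
  "witness F E \<phi> \<longleftrightarrow> \<not> sat_clause \<phi> E \<and> (\<forall>D\<in>F - {E}. sat_clause \<phi> D)"

definition set_lit :: "('v \<Rightarrow> bool) \<Rightarrow> 'v lit \<Rightarrow> 'v \<Rightarrow> bool" where
  "set_lit \<phi> l = \<phi>(var_lit l := (case l of Pos _ \<Rightarrow> True | Neg _ \<Rightarrow> False))"

lemma lit_true_comp [simp]: "lit_true \<phi> (comp l) \<longleftrightarrow> \<not> lit_true \<phi> l"
  by (cases l) auto

lemma var_lit_comp [simp]: "var_lit (comp l) = var_lit l"
  by (cases l) auto

lemma comp_comp [simp]: "comp (comp l) = l"
  by (cases l) auto

lemma var_lit_eq_cases: "var_lit m = var_lit l \<Longrightarrow> m = l \<or> m = comp l"
  by (cases l; cases m) auto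

lemma mem_comp_clause_iff: "l \<in> comp_clause A \<longleftrightarrow> comp l \<in> A"
  unfolding comp_clause_def by (metis comp_comp image_iff)

lemma lit_true_set_lit [simp]: "lit_true (set_lit \<phi> l) l"
  by (cases l) (auto simp: set_lit_def)

lemma lit_true_set_lit_comp [simp]: "\<not> lit_true (set_lit \<phi> (comp l)) l"
  using lit_true_set_lit[of \<phi> "comp l"] by simp

lemma lit_true_set_lit_other:
  "var_lit m \<noteq> var_lit l \<Longrightarrow> lit_true (set_lit \<phi> l) m \<longleftrightarrow> lit_true \<phi> m"
  by (cases l; cases m) (auto simp: set_lit_def)

lemma var_clauseI: "l \<in> E \<Longrightarrow> var_lit l \<in> var_clause E"
  by (simp add: var_clause_def)

lemma var_clsI: "E \<in> F \<Longrightarrow> l \<in> E \<Longrightarrow> var_lit l \<in> var_cls F"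
  unfolding var_cls_def var_clause_def by blast

lemma sat_clause_set_lit:
  "var_lit l \<notin> var_clause E \<Longrightarrow> sat_clause (set_lit \<phi> l) E \<longleftrightarrow> sat_clause \<phi> E"
  unfolding sat_clause_def using lit_true_set_lit_other var_clauseI by metis

lemma sat_clause_insert [simp]: "sat_clause \<phi> (insert l E) \<longleftrightarrow> lit_true \<phi> l \<or> sat_clause \<phi> E"
  by (simp add: sat_clause_def)

lemma sat_clauseI: "l \<in> E \<Longrightarrow> lit_true \<phi> l \<Longrightarrow> sat_clause \<phi> E"
  unfolding sat_clause_def by blast

lemma sat_clause_mono: "A \<subseteq> B \<Longrightarrow> sat_clause \<phi> A \<Longrightarrow> sat_clause \<phi> B"
  unfolding sat_clause_def by blast

lemma satisfiable_iff: "satisfiable F \<longleftrightarrow> (\<exists>\<phi>. \<forall>E\<in>F. sat_clause \<phi> E)"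
  by (simp add: satisfiable_def sat_clause_def)

lemma unsatisfiable_no_model: "\<not> satisfiable F \<Longrightarrow> \<forall>E\<in>F. sat_clause \<phi> E \<Longrightarrow> False"
  unfolding satisfiable_iff by blast

lemma witness_lit_true: "witness F E \<phi> \<Longrightarrow> comp y \<in> E \<Longrightarrow> lit_true \<phi> y"
  unfolding witness_def sat_clause_def by force

lemma min_unsat_iff_witness:
  "min_unsat F \<longleftrightarrow> \<not> satisfiable F \<and> (\<forall>E\<in>F. \<exists>\<phi>. witness F E \<phi>)"
proof
  assume mu: "min_unsat F"
  then have unsat: "\<not> satisfiable F" by (simp add: min_unsat_def)
  have "\<exists>\<phi>. witness F E \<phi>" if "E \<in> F" for E
  proof -
    from that have "F - {E} \<subset> F" by auto
    with mu obtain \<phi> where \<phi>: "\<forall>D\<in>F - {E}. sat_clause \<phi> D"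
      unfolding min_unsat_def satisfiable_iff by blast
    with unsat have "\<not> sat_clause \<phi> E"
      using unsatisfiable_no_model by blast
    with \<phi> show ?thesis unfolding witness_def by blast
  qed
  with unsat show "\<not> satisfiable F \<and> (\<forall>E\<in>F. \<exists>\<phi>. witness F E \<phi>)" by blast
next
  assume "\<not> satisfiable F \<and> (\<forall>E\<in>F. \<exists>\<phi>. witness F E \<phi>)"
  moreover have "satisfiable G" if "G \<subset> F" and "\<forall>E\<in>F. \<exists>\<phi>. witness F E \<phi>" for G
  proof -
    from that obtain E \<phi> where "E \<in> F - G" "witness F E \<phi>" by blast
    with \<open>G \<subset> F\<close> show ?thesis unfolding satisfiable_iff witness_def by blast
  qed
  ultimately show "min_unsat F" unfolding min_unsat_def by blast
qed

lemma witness_of_min_unsat: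
  assumes "min_unsat F" and "E \<in> F"
  obtains \<phi> where "witness F E \<phi>"
  using assms by (auto simp: min_unsat_iff_witness)

lemma satisfiable_extend_iff:
  assumes "\<not> satisfiable F" and "E \<in> F"
  shows "satisfiable (F - {E} \<union> {E \<union> {y}}) \<longleftrightarrow> (\<exists>\<phi>. witness F E \<phi> \<and> lit_true \<phi> y)"
proof
  assume "satisfiable (F - {E} \<union> {E \<union> {y}})"
  then obtain \<phi> where \<phi>: "\<forall>D\<in>F - {E}. sat_clause \<phi> D" "sat_clause \<phi> (E \<union> {y})"
    unfolding satisfiable_iff by blast
  with assms have "\<not> sat_clause \<phi> E"
    using unsatisfiable_no_model by blast
  with \<phi> show "\<exists>\<phi>. witness F E \<phi> \<and> lit_true \<phi> y"
    unfolding witness_def by auto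
qed (auto simp: satisfiable_iff witness_def)

text \<open>Extending a clause by a literal whose complement it already contains is always possible,
  so saturation can be phrased for all literals outside the clause.\<close>

lemma saturated_min_unsat_iff:
  "saturated_min_unsat F \<longleftrightarrow> \<not> satisfiable F \<and> (\<forall>E\<in>F. \<exists>\<phi>. witness F E \<phi>) \<and>
     (\<forall>E\<in>F. \<forall>y. y \<notin> E \<longrightarrow> var_lit y \<in> var_cls F \<longrightarrow> (\<exists>\<phi>. witness F E \<phi> \<and> lit_true \<phi> y))"
  (is "_ \<longleftrightarrow> ?unsat \<and> ?wit \<and> ?sat")
proof
  assume smu: "saturated_min_unsat F"
  then have unsat: ?unsat and wit: ?wit
    by (simp_all add: saturated_min_unsat_def min_unsat_iff_witness)
  have "\<exists>\<phi>. witness F E \<phi> \<and> lit_true \<phi> y"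
    if E: "E \<in> F" and y: "y \<notin> E" "var_lit y \<in> var_cls F" for E y
  proof (cases "comp y \<in> E")
    case True
    with wit E witness_lit_true show ?thesis by blast
  next
    case False
    with y have "var_lit y \<notin> var_clause E"
      unfolding var_clause_def using var_lit_eq_cases by fastforce
    with smu E y have "satisfiable (F - {E} \<union> {E \<union> {y}})"
      unfolding saturated_min_unsat_def by blast
    with satisfiable_extend_iff[OF unsat E] show ?thesis by blast
  qed
  with unsat wit show "?unsat \<and> ?wit \<and> ?sat" by blast
next
  assume asm: "?unsat \<and> ?wit \<and> ?sat"
  have "satisfiable (F - {E} \<union> {E \<union> {y}})"
    if E: "E \<in> F" and y: "var_lit y \<in> var_cls F - var_clause E" for E y
  proof -
    from y have "y \<notin> E" using var_clauseI by blast
    with asm E y show ?thesis using satisfiable_extend_iff[OF _ E] by blast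
  qed
  with asm show "saturated_min_unsat F"
    unfolding saturated_min_unsat_def min_unsat_iff_witness by blast
qed

lemma witness_of_saturated:
  assumes "saturated_min_unsat F" and "E \<in> F" and "y \<notin> E" and "var_lit y \<in> var_cls F"
  obtains \<phi> where "witness F E \<phi>" and "lit_true \<phi> y"
  using assms unfolding saturated_min_unsat_iff by blast

lemma Int_comp_clause_swap: "comp ` (A \<inter> comp_clause B) = B \<inter> comp_clause A"
  by (force simp: mem_comp_clause_iff)

lemma Int_comp_clause_singleton_swap:
  "A \<inter> comp_clause B = {l} \<longleftrightarrow> B \<inter> comp_clause A = {comp l}"
  by (metis Int_comp_clause_swap comp_comp image_empty image_insert)

text \<open>The definition of DP fixes the orientation of the clash at Pos v; since the clash condition is
  symmetric, it can be oriented at either literal of v.\<close>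

lemma DP_eq_resolvents:
  "DP (var_lit x) F = {E \<in> F. var_lit x \<notin> var_clause E}
     \<union> {(A \<union> B) - {x, comp x} | A B. A \<in> F \<and> B \<in> F \<and> A \<inter> comp_clause B = {x}}"
proof (cases x)
  case (Neg v)
  have "{(A \<union> B) - {Pos v, Neg v} | A B. A \<in> F \<and> B \<in> F \<and> A \<inter> comp_clause B = {Pos v}}
      = {(A \<union> B) - {Neg v, Pos v} | A B. A \<in> F \<and> B \<in> F \<and> A \<inter> comp_clause B = {Neg v}}"
    using Int_comp_clause_singleton_swap[where l = "Neg v"] by (auto simp: insert_commute)
  with Neg show ?thesis by (simp add: DP_def)
qed (simp add: DP_def)

locale singular_literal =
  fixes F :: "'v cls" and x :: "'v lit" and C :: "'v clause"
  assumes clause_set: "is_clause_set F"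
    and ldeg_x: "ldeg F x = 1"
    and main_clause: "C \<in> F"
    and x_in_main: "x \<in> C"
begin

abbreviation v :: 'v where "v \<equiv> var_lit x"

definition side_clauses :: "'v cls" where
  "side_clauses = {D \<in> F. comp x \<in> D}"

definition v_free_clauses :: "'v cls" where
  "v_free_clauses = {E \<in> F. v \<notin> var_clause E}"

abbreviation C' :: "'v clause" where "C' \<equiv> C - {x}"

abbreviation side_rest :: "'v clause \<Rightarrow> 'v clause" where
  "side_rest D \<equiv> D - {comp x}"

definition reduced :: "'v cls" where
  "reduced = v_free_clauses \<union> side_rest ` side_clauses"

lemma main_clause_unique: "E \<in> F \<Longrightarrow> x \<in> E \<Longrightarrow> E = C"
  using ldeg_x main_clause x_in_main unfolding ldeg_def
  by (metis (mono_tags, lifting) card_1_singletonE mem_Collect_eq singletonD)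

lemma clause_consistent: "E \<in> F \<Longrightarrow> l \<in> E \<Longrightarrow> comp l \<notin> E"
  using clause_set unfolding is_clause_set_def is_clause_def by blast

lemma clause_cases:
  assumes "E \<in> F"
  obtains "E \<in> v_free_clauses" | "E = C" | "E \<in> side_clauses"
  using assms main_clause_unique var_lit_eq_cases
  unfolding v_free_clauses_def side_clauses_def var_clause_def by fastforce

lemma side_clause_mem: "D \<in> side_clauses \<Longrightarrow> D \<in> F \<and> comp x \<in> D \<and> x \<notin> D"
  unfolding side_clauses_def using clause_consistent[of _ "comp x"] by auto

lemma comp_x_notin_main: "comp x \<notin> C"
  using clause_consistent main_clause x_in_main by blast

lemma main_notin_v_free: "C \<notin> v_free_clauses"
  using x_in_main var_clauseI by (auto simp: v_free_clauses_def)

lemma side_notin_v_free: "D \<in> side_clauses \<Longrightarrow> D \<notin> v_free_clauses"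
  using var_clauseI[of "comp x"] by (auto simp: side_clauses_def v_free_clauses_def)

lemma var_main_rest: "v \<notin> var_clause C'"
  using comp_x_notin_main var_lit_eq_cases unfolding var_clause_def by fastforce

lemma var_side_rest: "D \<in> side_clauses \<Longrightarrow> v \<notin> var_clause (side_rest D)"
  using side_clause_mem var_lit_eq_cases unfolding var_clause_def by fastforce

lemma exists_v_lit_notin: "E \<in> F \<Longrightarrow> \<exists>y. var_lit y = v \<and> y \<notin> E"
  using clause_consistent[of _ x] by (metis var_lit_comp)

lemma sat_main_clause_iff: "sat_clause \<phi> C \<longleftrightarrow> lit_true \<phi> x \<or> sat_clause \<phi> C'"
  using x_in_main by (metis insert_Diff sat_clause_insert)

lemma sat_side_clause_iff:
  "D \<in> side_clauses \<Longrightarrow> sat_clause \<phi> D \<longleftrightarrow> \<not> lit_true \<phi> x \<or> sat_clause \<phi> (side_rest D)"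
  using side_clause_mem by (metis insert_Diff lit_true_comp sat_clause_insert)

lemma sat_side_clauseI: "D \<in> side_clauses \<Longrightarrow> sat_clause \<phi> (side_rest D) \<Longrightarrow> sat_clause \<phi> D"
  by (simp add: sat_side_clause_iff)

lemma sat_set_lit_v_free:
  "E \<in> v_free_clauses \<Longrightarrow> var_lit l = v \<Longrightarrow> sat_clause (set_lit \<phi> l) E \<longleftrightarrow> sat_clause \<phi> E"
  by (simp add: sat_clause_set_lit v_free_clauses_def)

lemma sat_set_lit_main_rest:
  "var_lit l = v \<Longrightarrow> sat_clause (set_lit \<phi> l) C' \<longleftrightarrow> sat_clause \<phi> C'"
  using sat_clause_set_lit var_main_rest by metis

lemma sat_set_lit_side_rest:
  "D \<in> side_clauses \<Longrightarrow> var_lit l = v \<Longrightarrow>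
     sat_clause (set_lit \<phi> l) (side_rest D) \<longleftrightarrow> sat_clause \<phi> (side_rest D)"
  using sat_clause_set_lit var_side_rest by metis

lemma model_of_parts:
  assumes "\<forall>E\<in>v_free_clauses. sat_clause \<phi> E" and "sat_clause \<phi> C"
    and "\<forall>D\<in>side_clauses. sat_clause \<phi> D"
  shows "\<forall>E\<in>F. sat_clause \<phi> E"
  using assms clause_cases by metis

lemma witness_of_parts:
  assumes "E \<in> F" and "\<not> sat_clause \<phi> E"
    and "\<forall>E'\<in>v_free_clauses - {E}. sat_clause \<phi> E'" and "C \<noteq> E \<Longrightarrow> sat_clause \<phi> C"
    and "\<forall>D\<in>side_clauses - {E}. sat_clause \<phi> D"
  shows "witness F E \<phi>"
  unfolding witness_def using assms clause_cases by (metis DiffD1 DiffD2 DiffI insertI1)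

lemma side_clauses_nonempty:
  assumes mu: "min_unsat F"
  shows "side_clauses \<noteq> {}"
proof
  assume no_side: "side_clauses = {}"
  obtain \<phi> where \<phi>: "witness F C \<phi>"
    using witness_of_min_unsat[OF mu main_clause] .
  have "\<forall>E\<in>F. sat_clause (set_lit \<phi> x) E"
  proof (rule model_of_parts)
    show "\<forall>E\<in>v_free_clauses. sat_clause (set_lit \<phi> x) E"
      using \<phi> main_notin_v_free sat_set_lit_v_free
      by (auto simp: witness_def v_free_clauses_def)
  qed (auto simp: sat_main_clause_iff no_side)
  with mu show False
    using unsatisfiable_no_model by (auto simp: min_unsat_def)
qed

text \<open>If a literal of C' were missing from a side clause D, a witness for D making that literal
  true and then setting x false would satisfy F.\<close>

lemma main_rest_subset_side_rest:
  assumes smu: "saturated_min_unsat F" and D: "D \<in> side_clauses"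
  shows "C' \<subseteq> side_rest D"
proof
  fix y assume y: "y \<in> C'"
  then have yv: "var_lit y \<noteq> v"
    using var_main_rest var_clauseI by metis
  show "y \<in> side_rest D"
  proof (rule ccontr)
    assume "y \<notin> side_rest D"
    with y comp_x_notin_main have "y \<notin> D" by auto
    moreover have "var_lit y \<in> var_cls F"
      using y main_clause var_clsI by blast
    ultimately obtain \<psi> where \<psi>: "witness F D \<psi>" "lit_true \<psi> y"
      using witness_of_saturated[OF smu] side_clause_mem[OF D] by metis
    let ?\<phi> = "set_lit \<psi> (comp x)"
    have "\<forall>E\<in>F. sat_clause ?\<phi> E"
    proof (rule model_of_parts)
      show "\<forall>E\<in>v_free_clauses. sat_clause ?\<phi> E"
        using \<psi>(1) side_notin_v_free[OF D] sat_set_lit_v_free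
        by (auto simp: witness_def v_free_clauses_def)
      have "lit_true ?\<phi> y"
        using \<psi>(2) yv lit_true_set_lit_other[of y "comp x"] by simp
      with y show "sat_clause ?\<phi> C"
        using sat_clauseI by blast
      show "\<forall>D\<in>side_clauses. sat_clause ?\<phi> D"
        by (meson side_clause_mem sat_clauseI lit_true_set_lit)
    qed
    with smu show False
      using unsatisfiable_no_model by (auto simp: saturated_min_unsat_def min_unsat_def)
  qed
qed

lemma Inter_side_rest_subset_main_rest:
  assumes smu: "saturated_min_unsat F"
  shows "(\<Inter>D\<in>side_clauses. side_rest D) \<subseteq> C'"
proof
  fix z assume z: "z \<in> (\<Inter>D\<in>side_clauses. side_rest D)"
  have mu: "min_unsat F" using smu by (simp add: saturated_min_unsat_def)
  obtain D0 where D0: "D0 \<in> side_clauses"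
    using side_clauses_nonempty[OF mu] by blast
  with z have "z \<in> side_rest D0" by blast
  then have zv: "var_lit z \<noteq> v" and zF: "var_lit z \<in> var_cls F"
    using var_side_rest[OF D0] var_clauseI apply metis
    using side_clause_mem[OF D0] var_clsI \<open>z \<in> side_rest D0\<close> by blast
  show "z \<in> C'"
  proof (rule ccontr)
    assume "z \<notin> C'"
    with zv have "z \<notin> C" by auto
    then obtain \<phi> where \<phi>: "witness F C \<phi>" "lit_true \<phi> z"
      using witness_of_saturated[OF smu main_clause _ zF] by metis
    let ?\<psi> = "set_lit \<phi> x"
    have "\<forall>E\<in>F. sat_clause ?\<psi> E"
    proof (rule model_of_parts)
      show "\<forall>E\<in>v_free_clauses. sat_clause ?\<psi> E"
        using \<phi>(1) main_notin_v_free sat_set_lit_v_free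
        by (auto simp: witness_def v_free_clauses_def)
      have "lit_true ?\<psi> z"
        using \<phi>(2) lit_true_set_lit_other[OF zv] by simp
      with z show "\<forall>D\<in>side_clauses. sat_clause ?\<psi> D"
        using sat_clauseI by blast
    qed (simp add: sat_main_clause_iff)
    with mu show False
      using unsatisfiable_no_model by (auto simp: min_unsat_def)
  qed
qed

lemma main_rest_not_subset_v_free:
  assumes smu: "saturated_min_unsat F" and E: "E \<in> v_free_clauses"
  shows "\<not> C' \<subseteq> E"
proof
  assume sub: "C' \<subseteq> E"
  from E have EF: "E \<in> F" and "comp x \<notin> E"
    using var_clauseI[of "comp x" E] by (auto simp: v_free_clauses_def)
  moreover have "var_lit (comp x) \<in> var_cls F"
    using main_clause x_in_main var_clsI by fastforce
  ultimately obtain \<psi> where \<psi>: "witness F E \<psi>" "lit_true \<psi> (comp x)"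
    using witness_of_saturated[OF smu] by metis
  then have "\<not> sat_clause \<psi> C'"
    using sub sat_clause_mono unfolding witness_def by blast
  with \<psi>(2) have "\<not> sat_clause \<psi> C"
    by (simp add: sat_main_clause_iff)
  moreover have "C \<in> F - {E}"
    using E main_clause main_notin_v_free by blast
  ultimately show False
    using \<psi>(1) unfolding witness_def by blast
qed

lemma var_cls_reduced: "var_cls reduced \<subseteq> var_cls F - {v}"
proof
  fix w assume "w \<in> var_cls reduced"
  then obtain E l where E: "E \<in> reduced" "l \<in> E" and w: "w = var_lit l"
    unfolding var_cls_def var_clause_def by blast
  then consider "E \<in> v_free_clauses" | D where "D \<in> side_clauses" "E = side_rest D"
    unfolding reduced_def by blast
  then show "w \<in> var_cls F - {v}"
  proof cases
    case 1
    then have "E \<in> F" "v \<notin> var_clause E"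
      by (simp_all add: v_free_clauses_def)
    with E w show ?thesis
      using var_clsI[of E F l] var_clauseI[of l E] by auto
  next
    case (2 D)
    with E have "D \<in> F" "l \<in> D"
      using side_clause_mem by auto
    with E w 2 show ?thesis
      using var_clsI[of D F l] var_clauseI[of l E] var_side_rest by auto
  qed
qed

end

locale subsumed_main_rest = singular_literal +
  assumes main_rest_subset: "D \<in> side_clauses \<Longrightarrow> C' \<subseteq> side_rest D"
begin

lemma DP_eq_reduced: "DP v F = reduced"
proof -
  have "{(A \<union> B) - {x, comp x} | A B. A \<in> F \<and> B \<in> F \<and> A \<inter> comp_clause B = {x}}
      = side_rest ` side_clauses" (is "?R = _")
  proof
    show "?R \<subseteq> side_rest ` side_clauses"
    proof
      fix R assume "R \<in> ?R"
      then obtain A B where R: "R = (A \<union> B) - {x, comp x}" and AB: "A \<in> F" "B \<in> F"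
        and clash: "A \<inter> comp_clause B = {x}" by blast
      from clash have "x \<in> A" "comp x \<in> B"
        by (auto simp: mem_comp_clause_iff)
      with AB have "A = C" and B: "B \<in> side_clauses"
        using main_clause_unique by (auto simp: side_clauses_def)
      with R have "R = C' \<union> side_rest B"
        using side_clause_mem[OF B] comp_x_notin_main by auto
      also have "\<dots> = side_rest B"
        using main_rest_subset[OF B] by blast
      finally show "R \<in> side_rest ` side_clauses"
        using B by blast
    qed
  next
    show "side_rest ` side_clauses \<subseteq> ?R"
    proof
      fix R assume "R \<in> side_rest ` side_clauses"
      then obtain D where D: "D \<in> side_clauses" and R: "R = side_rest D" by blast
      have "C \<inter> comp_clause D = {x}"
      proof (intro equalityI subsetI)
        fix l assume l: "l \<in> C \<inter> comp_clause D"
        show "l \<in> {x}"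
        proof (rule ccontr)
          assume "l \<notin> {x}"
          with l main_rest_subset[OF D] have "l \<in> D" by blast
          with l show False
            using clause_consistent side_clause_mem[OF D] by (auto simp: mem_comp_clause_iff)
        qed
      qed (use x_in_main side_clause_mem[OF D] in \<open>auto simp: mem_comp_clause_iff\<close>)
      moreover have "R = (C \<union> D) - {x, comp x}"
        using R main_rest_subset[OF D] side_clause_mem[OF D] by auto
      ultimately show "R \<in> ?R"
        using main_clause side_clause_mem[OF D] by blast
    qed
  qed
  then show ?thesis
    unfolding DP_eq_resolvents reduced_def v_free_clauses_def by simp
qed

lemma var_cls_subset_reduced:
  assumes side: "side_clauses \<noteq> {}"
  shows "var_cls F - {v} \<subseteq> var_cls reduced"
proof
  fix w assume "w \<in> var_cls F - {v}"
  then obtain E l where E: "E \<in> F" "l \<in> E" and w: "w = var_lit l" "w \<noteq> v"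
    unfolding var_cls_def var_clause_def by blast
  from E(1) show "w \<in> var_cls reduced"
  proof (cases rule: clause_cases)
    case 1
    then show ?thesis
      using E w var_clsI[of E reduced l] by (simp add: reduced_def)
  next
    case 2
    obtain D where D: "D \<in> side_clauses" using side by blast
    have "l \<in> side_rest D"
      using main_rest_subset[OF D] E w 2 by auto
    then show ?thesis
      using D w var_clsI[of "side_rest D" reduced l] by (simp add: reduced_def)
  next
    case 3
    have "l \<in> side_rest E"
      using E w by auto
    then show ?thesis
      using 3 w var_clsI[of "side_rest E" reduced l] by (simp add: reduced_def)
  qed
qed

lemma sat_side_rest:
  assumes "D \<in> side_clauses" and "sat_clause \<phi> D" and "sat_clause \<phi> C"
  shows "sat_clause \<phi> (side_rest D)"
proof (cases "lit_true \<phi> x")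
  case True
  with assms(1,2) show ?thesis by (simp add: sat_side_clause_iff)
next
  case False
  with assms(3) have "sat_clause \<phi> C'" by (simp add: sat_main_clause_iff)
  with main_rest_subset[OF assms(1)] show ?thesis by (rule sat_clause_mono)
qed

lemma satisfiable_reduced_iff: "satisfiable reduced \<longleftrightarrow> satisfiable F"
proof
  assume "satisfiable reduced"
  then obtain \<psi> where \<psi>: "\<forall>E\<in>reduced. sat_clause \<psi> E"
    unfolding satisfiable_iff by blast
  have "\<forall>E\<in>F. sat_clause (set_lit \<psi> x) E"
  proof (rule model_of_parts)
    show "\<forall>E\<in>v_free_clauses. sat_clause (set_lit \<psi> x) E"
      using \<psi> sat_set_lit_v_free by (simp add: reduced_def)
    show "\<forall>D\<in>side_clauses. sat_clause (set_lit \<psi> x) D"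
      using \<psi> sat_set_lit_side_rest sat_side_clauseI by (simp add: reduced_def)
  qed (simp add: sat_main_clause_iff)
  then show "satisfiable F"
    unfolding satisfiable_iff by blast
next
  assume "satisfiable F"
  then obtain \<phi> where "\<forall>E\<in>F. sat_clause \<phi> E"
    unfolding satisfiable_iff by blast
  then have "\<forall>E\<in>reduced. sat_clause \<phi> E"
    using main_clause sat_side_rest side_clause_mem
    by (auto simp: reduced_def v_free_clauses_def)
  then show "satisfiable reduced"
    unfolding satisfiable_iff by blast
qed

lemma side_rest_inj: "inj_on side_rest side_clauses"
  by (rule inj_onI) (metis insert_Diff side_clause_mem)

lemma witness_reduced_of_v_free:
  assumes E: "E \<in> v_free_clauses" and \<phi>: "witness F E \<phi>"
  shows "witness reduced E \<phi>"
  unfolding witness_def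
proof (intro conjI ballI)
  show "\<not> sat_clause \<phi> E" using \<phi> by (simp add: witness_def)
  fix E' assume E': "E' \<in> reduced - {E}"
  then consider "E' \<in> v_free_clauses" | D where "D \<in> side_clauses" "E' = side_rest D"
    unfolding reduced_def by blast
  then show "sat_clause \<phi> E'"
  proof cases
    case 1
    with E' \<phi> show ?thesis by (simp add: witness_def v_free_clauses_def)
  next
    case (2 D)
    have "D \<in> F - {E}" "C \<in> F - {E}"
      using 2 E side_clause_mem side_notin_v_free main_clause main_notin_v_free by blast+
    with \<phi> 2 show ?thesis
      using sat_side_rest by (simp add: witness_def)
  qed
qed

lemma witness_reduced_of_side:
  assumes D: "D \<in> side_clauses" and \<phi>: "witness F D \<phi>"
  shows "witness reduced (side_rest D) \<phi>"
  unfolding witness_def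
proof (intro conjI ballI)
  have "\<not> sat_clause \<phi> D" using \<phi> by (simp add: witness_def)
  then have "\<not> sat_clause \<phi> (side_rest D)" and x: "lit_true \<phi> x"
    using sat_side_clause_iff[OF D] by simp_all
  then show "\<not> sat_clause \<phi> (side_rest D)" by blast
  fix E' assume E': "E' \<in> reduced - {side_rest D}"
  then consider "E' \<in> v_free_clauses" | D' where "D' \<in> side_clauses" "E' = side_rest D'"
    unfolding reduced_def by blast
  then show "sat_clause \<phi> E'"
  proof cases
    case 1
    then have "E' \<in> F - {D}"
      using side_notin_v_free[OF D] by (auto simp: v_free_clauses_def)
    with \<phi> show ?thesis by (simp add: witness_def)
  next
    case (2 D')
    with E' have "D' \<in> F - {D}"
      using side_clause_mem by blast
    with \<phi> have "sat_clause \<phi> D'"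
      by (simp add: witness_def)
    with 2 x show ?thesis
      by (simp add: sat_side_clause_iff)
  qed
qed

lemma witness_v_free_of_reduced:
  assumes E: "E \<in> v_free_clauses" and \<psi>: "witness reduced E \<psi>"
    and disjoint: "E \<notin> side_rest ` side_clauses"
    and l: "var_lit l = v" and main: "lit_true (set_lit \<psi> l) x \<or> sat_clause \<psi> C'"
  shows "witness F E (set_lit \<psi> l)"
proof (rule witness_of_parts)
  show "E \<in> F" using E by (simp add: v_free_clauses_def)
  show "\<not> sat_clause (set_lit \<psi> l) E"
    using \<psi> E l sat_set_lit_v_free by (simp add: witness_def)
  show "\<forall>E'\<in>v_free_clauses - {E}. sat_clause (set_lit \<psi> l) E'"
    using \<psi> l sat_set_lit_v_free by (simp add: witness_def reduced_def)
  show "sat_clause (set_lit \<psi> l) C"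
    using main l sat_set_lit_main_rest by (simp add: sat_main_clause_iff)
  show "\<forall>D\<in>side_clauses - {E}. sat_clause (set_lit \<psi> l) D"
  proof
    fix D assume D: "D \<in> side_clauses - {E}"
    with disjoint have "side_rest D \<in> reduced - {E}"
      by (auto simp: reduced_def)
    with \<psi> D l show "sat_clause (set_lit \<psi> l) D"
      using sat_set_lit_side_rest sat_side_clauseI by (simp add: witness_def)
  qed
qed

lemma witness_side_of_reduced:
  assumes D: "D \<in> side_clauses" and \<psi>: "witness reduced (side_rest D) \<psi>"
    and disjoint: "side_rest D \<notin> v_free_clauses"
  shows "witness F D (set_lit \<psi> x)"
proof (rule witness_of_parts)
  show "D \<in> F" using D side_clause_mem by blast
  show "\<not> sat_clause (set_lit \<psi> x) D"
    using \<psi> D sat_set_lit_side_rest by (simp add: witness_def sat_side_clause_iff)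
  show "\<forall>E'\<in>v_free_clauses - {D}. sat_clause (set_lit \<psi> x) E'"
    using \<psi> disjoint sat_set_lit_v_free by (auto simp: witness_def reduced_def)
  show "sat_clause (set_lit \<psi> x) C"
    by (simp add: sat_main_clause_iff)
  show "\<forall>D'\<in>side_clauses - {D}. sat_clause (set_lit \<psi> x) D'"
  proof
    fix D' assume D': "D' \<in> side_clauses - {D}"
    then have "side_rest D' \<in> reduced - {side_rest D}"
      using D side_rest_inj by (auto simp: reduced_def inj_on_def)
    with \<psi> D' show "sat_clause (set_lit \<psi> x) D'"
      using sat_set_lit_side_rest sat_side_clauseI by (simp add: witness_def)
  qed
qed

lemma witness_main_of_reduced:
  assumes D: "D \<in> side_clauses" and \<psi>: "witness reduced (side_rest D) \<psi>"
    and disjoint: "side_rest D \<notin> v_free_clauses"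
  shows "witness F C (set_lit \<psi> (comp x))"
proof (rule witness_of_parts)
  have "\<not> sat_clause \<psi> C'"
    using \<psi> main_rest_subset[OF D] sat_clause_mono by (auto simp: witness_def)
  then show "\<not> sat_clause (set_lit \<psi> (comp x)) C"
    using sat_set_lit_main_rest[of "comp x"] by (simp add: sat_main_clause_iff)
  show "\<forall>E'\<in>v_free_clauses - {C}. sat_clause (set_lit \<psi> (comp x)) E'"
    using \<psi> disjoint sat_set_lit_v_free[of _ "comp x"] by (auto simp: witness_def reduced_def)
  show "\<forall>D'\<in>side_clauses - {C}. sat_clause (set_lit \<psi> (comp x)) D'"
    by (meson DiffD1 side_clause_mem sat_clauseI lit_true_set_lit)
qed (use main_clause in auto)

lemma saturated_min_unsat_reduced:
  assumes smu: "saturated_min_unsat F"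
  shows "saturated_min_unsat reduced"
proof -
  have mu: "min_unsat F"
    using smu by (simp add: saturated_min_unsat_def)
  then have unsat: "\<not> satisfiable reduced"
    by (simp add: min_unsat_def satisfiable_reduced_iff)
  have wit: "\<exists>\<phi>. witness reduced E \<phi>" if "E \<in> reduced" for E
  proof -
    from that consider "E \<in> v_free_clauses" | D where "D \<in> side_clauses" "E = side_rest D"
      unfolding reduced_def by blast
    then show ?thesis
    proof cases
      case 1
      then have "E \<in> F" by (simp add: v_free_clauses_def)
      then obtain \<phi> where "witness F E \<phi>" by (rule witness_of_min_unsat[OF mu])
      with 1 show ?thesis using witness_reduced_of_v_free by blast
    next
      case (2 D)
      then have "D \<in> F" using side_clause_mem by blast
      then obtain \<phi> where "witness F D \<phi>" by (rule witness_of_min_unsat[OF mu])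
      with 2 show ?thesis using witness_reduced_of_side by blast
    qed
  qed
  have lit: "\<exists>\<phi>. witness reduced E \<phi> \<and> lit_true \<phi> y"
    if E: "E \<in> reduced" and y: "y \<notin> E" "var_lit y \<in> var_cls reduced" for E y
  proof -
    from y(2) var_cls_reduced have yF: "var_lit y \<in> var_cls F" and yv: "var_lit y \<noteq> v"
      by blast+
    from E consider "E \<in> v_free_clauses" | D where "D \<in> side_clauses" "E = side_rest D"
      unfolding reduced_def by blast
    then show ?thesis
    proof cases
      case 1
      then have "E \<in> F" by (simp add: v_free_clauses_def)
      then obtain \<phi> where "witness F E \<phi>" "lit_true \<phi> y"
        by (rule witness_of_saturated[OF smu _ y(1) yF])
      with 1 show ?thesis using witness_reduced_of_v_free by blast
    next
      case (2 D)
      from yv have "y \<noteq> comp x" by auto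
      with y(1) 2 have "y \<notin> D" by blast
      moreover from 2 have "D \<in> F" using side_clause_mem by blast
      ultimately obtain \<phi> where "witness F D \<phi>" "lit_true \<phi> y"
        using witness_of_saturated[OF smu _ _ yF] by blast
      with 2 show ?thesis using witness_reduced_of_side by blast
    qed
  qed
  from unsat wit lit show ?thesis
    unfolding saturated_min_unsat_iff by blast
qed

context
  assumes smu_reduced: "saturated_min_unsat reduced"
    and side_nonempty: "side_clauses \<noteq> {}"
    and disjoint: "\<And>D. D \<in> side_clauses \<Longrightarrow> side_rest D \<notin> v_free_clauses"
begin

lemma reduced_witness:
  assumes "E \<in> reduced"
  obtains \<psi> where "witness reduced E \<psi>"
proof -
  have "min_unsat reduced"
    using smu_reduced by (simp add: saturated_min_unsat_def)
  from witness_of_min_unsat[OF this assms] that show ?thesis by blast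
qed

lemma reduced_witness_lit:
  assumes "E \<in> reduced" and "y \<notin> E" and "var_lit y \<in> var_cls F" and "var_lit y \<noteq> v"
  obtains \<psi> where "witness reduced E \<psi>" and "lit_true \<psi> y"
proof -
  have "var_lit y \<in> var_cls reduced"
    using assms(3,4) var_cls_subset_reduced[OF side_nonempty] by blast
  from witness_of_saturated[OF smu_reduced assms(1,2) this] that show ?thesis by blast
qed

text \<open>To make comp x true, C has to be satisfied through C': use a literal of C' outside E.\<close>

lemma witness_lit_v_free:
  assumes E: "E \<in> v_free_clauses" and not_sub: "\<not> C' \<subseteq> E"
    and y: "y \<notin> E" "var_lit y \<in> var_cls F"
  shows "\<exists>\<phi>. witness F E \<phi> \<and> lit_true \<phi> y"
proof -
  have ER: "E \<in> reduced"
    using E by (simp add: reduced_def)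
  have E_nside: "E \<notin> side_rest ` side_clauses"
    using E disjoint by blast
  consider "y = x" | "y = comp x" | "var_lit y \<noteq> v"
    using var_lit_eq_cases[of y x] by blast
  then show ?thesis
  proof cases
    case 1
    obtain \<psi> where \<psi>: "witness reduced E \<psi>"
      using reduced_witness[OF ER] .
    have "witness F E (set_lit \<psi> x)"
      by (rule witness_v_free_of_reduced[OF E \<psi> E_nside]) simp_all
    with 1 show ?thesis by auto
  next
    case 2
    from not_sub obtain c where c: "c \<in> C'" "c \<notin> E" by blast
    have "var_lit c \<in> var_cls F"
      using c(1) main_clause var_clsI by blast
    moreover have "var_lit c \<noteq> v"
      using c(1) var_main_rest var_clauseI by metis
    ultimately obtain \<psi> where \<psi>: "witness reduced E \<psi>" "lit_true \<psi> c"
      by (rule reduced_witness_lit[OF ER c(2)])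
    have "sat_clause \<psi> C'" by (rule sat_clauseI[OF c(1) \<psi>(2)])
    then have "witness F E (set_lit \<psi> (comp x))"
      using witness_v_free_of_reduced[OF E \<psi>(1) E_nside, of "comp x"] by simp
    with 2 show ?thesis by auto
  next
    case 3
    obtain \<psi> where \<psi>: "witness reduced E \<psi>" "lit_true \<psi> y"
      using reduced_witness_lit[OF ER y 3] by blast
    have "witness F E (set_lit \<psi> x)"
      by (rule witness_v_free_of_reduced[OF E \<psi>(1) E_nside]) simp_all
    moreover have "lit_true (set_lit \<psi> x) y"
      using \<psi>(2) lit_true_set_lit_other[OF 3] by simp
    ultimately show ?thesis by blast
  qed
qed

lemma witness_lit_main:
  assumes Inter: "C' = (\<Inter>D\<in>side_clauses. side_rest D)"
    and y: "y \<notin> C" "var_lit y \<in> var_cls F"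
  shows "\<exists>\<phi>. witness F C \<phi> \<and> lit_true \<phi> y"
proof -
  from y(1) have "y \<notin> C'" by blast
  then have "y \<notin> (\<Inter>D\<in>side_clauses. side_rest D)"
    unfolding Inter .
  then obtain D where D: "D \<in> side_clauses" "y \<notin> side_rest D"
    by blast
  have DR: "side_rest D \<in> reduced"
    using D by (simp add: reduced_def)
  have D_nfree: "side_rest D \<notin> v_free_clauses"
    using D disjoint by blast
  have "y \<noteq> x" using y x_in_main by blast
  then consider "y = comp x" | "var_lit y \<noteq> v"
    using var_lit_eq_cases[of y x] by blast
  then show ?thesis
  proof cases
    case 1
    obtain \<psi> where "witness reduced (side_rest D) \<psi>"
      using reduced_witness[OF DR] .
    then have "witness F C (set_lit \<psi> (comp x))"
      using witness_main_of_reduced[OF D(1) _ D_nfree] by blast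
    with 1 show ?thesis by auto
  next
    case 2
    obtain \<psi> where \<psi>: "witness reduced (side_rest D) \<psi>" "lit_true \<psi> y"
      using reduced_witness_lit[OF DR D(2) y(2) 2] by blast
    then have "witness F C (set_lit \<psi> (comp x))"
      using witness_main_of_reduced[OF D(1) _ D_nfree] by blast
    moreover have "lit_true (set_lit \<psi> (comp x)) y"
      using \<psi>(2) 2 lit_true_set_lit_other[of y "comp x"] by simp
    ultimately show ?thesis by blast
  qed
qed

lemma witness_lit_side:
  assumes D: "D \<in> side_clauses" and y: "y \<notin> D" "var_lit y \<in> var_cls F"
  shows "\<exists>\<phi>. witness F D \<phi> \<and> lit_true \<phi> y"
proof -
  have DR: "side_rest D \<in> reduced"
    using D by (simp add: reduced_def)
  have D_nfree: "side_rest D \<notin> v_free_clauses"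
    using D disjoint by blast
  have "y \<noteq> comp x" using y D side_clause_mem by blast
  then consider "y = x" | "var_lit y \<noteq> v"
    using var_lit_eq_cases[of y x] by blast
  then show ?thesis
  proof cases
    case 1
    obtain \<psi> where "witness reduced (side_rest D) \<psi>"
      using reduced_witness[OF DR] .
    then have "witness F D (set_lit \<psi> x)"
      using witness_side_of_reduced[OF D _ D_nfree] by blast
    with 1 show ?thesis by auto
  next
    case 2
    have "y \<notin> side_rest D" using y by blast
    then obtain \<psi> where \<psi>: "witness reduced (side_rest D) \<psi>" "lit_true \<psi> y"
      using reduced_witness_lit[OF DR _ y(2) 2] by blast
    then have "witness F D (set_lit \<psi> x)"
      using witness_side_of_reduced[OF D _ D_nfree] by blast
    moreover have "lit_true (set_lit \<psi> x) y"
      using \<psi>(2) lit_true_set_lit_other[OF 2] by simp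
    ultimately show ?thesis by blast
  qed
qed

end

lemma saturated_min_unsat_of_reduced:
  assumes smu: "saturated_min_unsat reduced"
    and Inter: "C' = (\<Inter>D\<in>side_clauses. side_rest D)"
    and not_sub: "\<forall>E\<in>v_free_clauses. \<not> C' \<subseteq> E"
  shows "saturated_min_unsat F"
proof -
  have side_nonempty: "side_clauses \<noteq> {}"
    using Inter comp_x_notin_main by auto
  have disjoint: "side_rest D \<notin> v_free_clauses" if "D \<in> side_clauses" for D
    using not_sub main_rest_subset[OF that] by blast
  have unsat: "\<not> satisfiable F"
    using smu by (simp add: saturated_min_unsat_def min_unsat_def satisfiable_reduced_iff)
  have lit: "\<exists>\<phi>. witness F E \<phi> \<and> lit_true \<phi> y"
    if E: "E \<in> F" and y: "y \<notin> E" "var_lit y \<in> var_cls F" for E y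
    using E
  proof (cases rule: clause_cases)
    case 1
    with not_sub y show ?thesis
      using witness_lit_v_free[OF smu side_nonempty disjoint] by blast
  next
    case 2
    with y show ?thesis
      using witness_lit_main[OF smu side_nonempty disjoint Inter] by blast
  next
    case 3
    with y show ?thesis
      using witness_lit_side[OF smu side_nonempty disjoint] by blast
  qed
  have "\<exists>\<phi>. witness F E \<phi>" if "E \<in> F" for E
  proof -
    from that obtain y where "var_lit y = v" "y \<notin> E"
      using exists_v_lit_notin by blast
    moreover have "v \<in> var_cls F"
      using main_clause x_in_main var_clsI by blast
    ultimately have "var_lit y \<in> var_cls F" by simp
    with lit[OF that \<open>y \<notin> E\<close>] show ?thesis by blast
  qed
  with unsat lit show ?thesis
    unfolding saturated_min_unsat_iff by blast
qed

end

theorem (in singular_literal) saturated_min_unsat_iff_DP: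
  "saturated_min_unsat F \<longleftrightarrow>
     saturated_min_unsat (DP v F) \<and> C' = (\<Inter>D\<in>side_clauses. side_rest D)
     \<and> (\<forall>E\<in>F. v \<notin> var_clause E \<longrightarrow> \<not> C' \<subseteq> E)"
proof (intro iffI conjI ballI impI)
  assume smu: "saturated_min_unsat F"
  interpret subsumed_main_rest F x C
    using main_rest_subset_side_rest[OF smu] by unfold_locales
  show "saturated_min_unsat (DP v F)"
    using saturated_min_unsat_reduced[OF smu] by (simp add: DP_eq_reduced)
  show "C' = (\<Inter>D\<in>side_clauses. side_rest D)"
    using Inter_side_rest_subset_main_rest[OF smu] main_rest_subset by blast
  show "\<not> C' \<subseteq> E" if "E \<in> F" and "v \<notin> var_clause E" for E
    using main_rest_not_subset_v_free[OF smu] that by (simp add: v_free_clauses_def)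
next
  assume "saturated_min_unsat (DP v F) \<and> C' = (\<Inter>D\<in>side_clauses. side_rest D)
     \<and> (\<forall>E\<in>F. v \<notin> var_clause E \<longrightarrow> \<not> C' \<subseteq> E)"
  then have smu: "saturated_min_unsat (DP v F)"
    and Inter: "C' = (\<Inter>D\<in>side_clauses. side_rest D)"
    and not_sub: "\<forall>E\<in>v_free_clauses. \<not> C' \<subseteq> E"
    unfolding v_free_clauses_def by blast+
  interpret subsumed_main_rest F x C
    using Inter by unfold_locales blast
  show "saturated_min_unsat F"
    using saturated_min_unsat_of_reduced smu Inter not_sub by (simp add: DP_eq_reduced)
qed

theorem lemma12:
  fixes F :: "'v cls" and v :: 'v and x :: "'v lit" and C :: "'v clause"
  assumes "is_clause_set F"
    and "singular F v"
    and "var_lit x = v" and "ldeg F x = 1"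
    and "C \<in> F" and "x \<in> C"
  shows "saturated_min_unsat F \<longleftrightarrow>
     (saturated_min_unsat (DP v F)
      \<and> C - {x} = (\<Inter>D\<in>{D \<in> F. comp x \<in> D}. D - {comp x})
      \<and> (\<forall>E\<in>F. v \<notin> var_clause E \<longrightarrow> \<not> C - {x} \<subseteq> E))"
proof -
  interpret singular_literal F x C
    using assms by unfold_locales
  show ?thesis
    using saturated_min_unsat_iff_DP \<open>var_lit x = v\<close> by (simp add: side_clauses_def)
qed

end
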